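(* For every $A\in\mathcal{M}_n$ there exist $B\in\mathcal{M}_n$ such that none of $\alpha^B_1,\dots,\alpha^B_n$ is of even exceptional type, and a graded ring isomorphism $\psi\colon H^*(M(A);\mathbb{Z})\to H^*(M(B);\mathbb{Z})$ with $\psi(p(M(A)))=p(M(B))$, where $p$ denotes the total Pontrjagin class.
   Context: Let $\mathcal{M}_n$ be the set of integral strictly upper triangular $n\times n$ matrices $A=(A^i_j)$ ($A^i_j$ is the $(i,j)$ entry, and $A^i_j=0$ for $i\ge j$). For $A\in\mathcal{M}_n$, $M(A)$ denotes the Bott manifold obtained as the quotient of $(S^3)^n$ ($S^3\subset\mathbb{C}^2$ the unit sphere) by the free $(S^1)^n$-action $(g_1,\dots,g_n)\cdot((z_1,w_1),\dots,(z_n,w_n))=\big(((\prod_{k<j}g_k^{-A^k_j})g_jz_j,\ g_jw_j)\big)_{j=1}^n$. Let $x^A_j\in H^2(M(A);\mathbb{Z})$ be the first Chern class of the line bundle obtained as the quotient of $(S^3)^n\times\mathbb{C}$ where $g$ acts on the $\mathbb{C}$-factor by $g_j^{-1}$. Put $\alpha^A_j=\sum_{i<j}A^i_jx^A_i$. Then $H^*(M(A);\mathbb{Z})=\mathbb{Z}[x^A_1,\dots,x^A_n]/((x^A_j)^2-\alpha^A_jx^A_j\mid j=1,\dots,n)$. Define $y^A_j=x^A_j-\tfrac12\alpha^A_j\in H^2(M(A);\mathbb{Q})$. The same notation is used for $B$. We say $\alpha^B_j$ is of exceptional type if $\alpha^B_j=cy^B_i$ for some nonzero integer $c$ and some $i<j$,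 and of even exceptional type if moreover this integer $c$ is even. *)

theory Defs
  imports Complex_Main "HOL-Algebra.QuotRing" "HOL-Library.Poly_Mapping"
begin

text \<open>Indices are 0-based: x_0,...,x_{n-1} correspond to x_1,...,x_n of the paper.\<close>

type_synonym 'a mpoly = "(nat \<Rightarrow>\<^sub>0 nat) \<Rightarrow>\<^sub>0 'a"

definition mvar :: "nat \<Rightarrow> 'a::comm_ring_1 mpoly" where
  "mvar i = Poly_Mapping.single (Poly_Mapping.single i 1) 1"

definition mconst :: "'a::comm_ring_1 \<Rightarrow> 'a mpoly" where
  "mconst c = Poly_Mapping.single 0 c"

definition mpoly_vars :: "'a::comm_ring_1 mpoly \<Rightarrow> nat set" where
  "mpoly_vars p = \<Union> (Poly_Mapping.keys ` Poly_Mapping.keys p)"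

definition homogeneous :: "nat \<Rightarrow> 'a::comm_ring_1 mpoly \<Rightarrow> bool" where
  "homogeneous k p \<longleftrightarrow>
     (\<forall>m \<in> Poly_Mapping.keys p. (\<Sum>i \<in> Poly_Mapping.keys m. Poly_Mapping.lookup m i) = k)"

definition poly_ring :: "nat \<Rightarrow> ('a::comm_ring_1 mpoly) ring" where
  "poly_ring n = \<lparr>carrier = {p. mpoly_vars p \<subseteq> {..<n}}, monoid.mult = (*), one = 1,
                  zero = 0, add = (+)\<rparr>"

text \<open>The set M_n of integral strictly upper triangular n x n matrices
  (entries A i j, 0-based, all entries outside the n x n range are 0).\<close>
definition bott_matrix :: "nat \<Rightarrow> (nat \<Rightarrow> nat \<Rightarrow> int) \<Rightarrow> bool" where
  "bott_matrix n A \<longleftrightarrow> (\<forall>i j. A i j \<noteq> 0 \<longrightarrow> i < j \<and> j < n)"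

definition bott_alpha :: "(nat \<Rightarrow> nat \<Rightarrow> int) \<Rightarrow> nat \<Rightarrow> 'a::comm_ring_1 mpoly" where
  "bott_alpha A j = (\<Sum>i<j. of_int (A i j) * mvar i)"

definition bott_ideal :: "nat \<Rightarrow> (nat \<Rightarrow> nat \<Rightarrow> int) \<Rightarrow> 'a::comm_ring_1 mpoly set" where
  "bott_ideal n A = genideal (poly_ring n) {mvar j ^ 2 - bott_alpha A j * mvar j | j. j < n}"

text \<open>H^*(M(A); 'a) = 'a[x_0..x_{n-1}] / (x_j^2 - alpha_j x_j); 'a = int or rat.\<close>
definition cohom :: "nat \<Rightarrow> (nat \<Rightarrow> nat \<Rightarrow> int) \<Rightarrow> ('a::comm_ring_1 mpoly set) ring" where
  "cohom n A = poly_ring n Quot bott_ideal n A"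

definition cohom_class :: "nat \<Rightarrow> (nat \<Rightarrow> nat \<Rightarrow> int) \<Rightarrow> 'a::comm_ring_1 mpoly \<Rightarrow> 'a mpoly set" where
  "cohom_class n A p = bott_ideal n A +>\<^bsub>poly_ring n\<^esub> p"

text \<open>H^d(M(A)): classes of homogeneous polynomials of degree d/2 (x_j has degree 2);
  zero in odd degrees.\<close>
definition cohom_deg :: "nat \<Rightarrow> (nat \<Rightarrow> nat \<Rightarrow> int) \<Rightarrow> nat \<Rightarrow> 'a::comm_ring_1 mpoly set set" where
  "cohom_deg n A d = {cohom_class n A p | p. p \<in> carrier (poly_ring n) \<and>
                         (p = 0 \<or> (even d \<and> homogeneous (d div 2) p))}"

definition graded_ring_iso :: "nat \<Rightarrow> (nat \<Rightarrow> nat \<Rightarrow> int) \<Rightarrow> (nat \<Rightarrow> nat \<Rightarrow> int)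
    \<Rightarrow> (int mpoly set \<Rightarrow> int mpoly set) \<Rightarrow> bool" where
  "graded_ring_iso n A B \<psi> \<longleftrightarrow>
     \<psi> \<in> ring_iso (cohom n A) (cohom n B) \<and> (\<forall>d. \<psi> ` cohom_deg n A d \<subseteq> cohom_deg n B d)"

definition pontrjagin :: "nat \<Rightarrow> (nat \<Rightarrow> nat \<Rightarrow> int) \<Rightarrow> int mpoly set" where
  "pontrjagin n A = cohom_class n A (\<Prod>j<n. 1 + bott_alpha A j ^ 2)"

definition bott_y :: "(nat \<Rightarrow> nat \<Rightarrow> int) \<Rightarrow> nat \<Rightarrow> rat mpoly" where
  "bott_y A i = mvar i - mconst (1/2) * bott_alpha A i"

definition even_exceptional :: "nat \<Rightarrow> (nat \<Rightarrow> nat \<Rightarrow> int) \<Rightarrow> nat \<Rightarrow> bool" where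
  "even_exceptional n B j \<longleftrightarrow>
     (\<exists>c::int. \<exists>i<j. c \<noteq> 0 \<and> even c \<and>
        cohom_class n B (bott_alpha B j :: rat mpoly) = cohom_class n B (of_int c * bott_y B i))"

end

theory Submission
  imports Defs
begin

text \<open>
  Since the relations \<open>x\<^sub>k\<^sup>2 - \<alpha>\<^sub>k x\<^sub>k\<close> are quadratic, comparing linear coefficients shows
  that \<open>\<alpha>\<^sub>j = 2m y\<^sub>i\<close> means \<open>\<alpha>\<^sub>j = 2m x\<^sub>i - m \<alpha>\<^sub>i\<close>. Then the linear substitution
  \<open>x\<^sub>j \<mapsto> x\<^sub>j + m x\<^sub>i\<close> carries the relations of \<open>A\<close> into those of the matrix \<open>B\<close> obtained
  by adding \<open>m\<close> times row \<open>j\<close> to row \<open>i\<close> and subtracting \<open>2m\<close> at \<open>(i, j)\<close>, so it induces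
  a graded isomorphism \<open>H\<^sup>*(M(A)) \<cong> H\<^sup>*(M(B))\<close>. It preserves the Pontrjagin class because
  \<open>\<alpha>\<^sup>A\<^sub>j\<^sup>2 = m\<^sup>2 (2 x\<^sub>i - \<alpha>\<^sub>i)\<^sup>2 = \<alpha>\<^sup>B\<^sub>j\<^sup>2 + 4m\<^sup>2 (x\<^sub>i\<^sup>2 - \<alpha>\<^sub>i x\<^sub>i)\<close>.
  The new column \<open>j\<close> is \<open>-m\<close> times column \<open>i\<close>, hence supported strictly above row \<open>i\<close>;
  so repeating the move on column \<open>j\<close> terminates, and since the earlier columns are left
  untouched, the columns can be cleared from left to right.
\<close>

lemma keys_plus_nat:
  "Poly_Mapping.keys ((a::nat \<Rightarrow>\<^sub>0 nat) + b) = Poly_Mapping.keys a \<union> Poly_Mapping.keys b"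
  by (auto simp: in_keys_iff lookup_add)

lemma mpoly_vars_0 [simp]: "mpoly_vars 0 = {}"
  by (simp add: mpoly_vars_def)

lemma mpoly_vars_1 [simp]: "mpoly_vars (1::'a::comm_ring_1 mpoly) = {}"
  by (simp add: mpoly_vars_def)

lemma mpoly_vars_mconst [simp]: "mpoly_vars (mconst c) = {}"
  by (simp add: mpoly_vars_def mconst_def)

lemma mpoly_vars_uminus [simp]: "mpoly_vars (- p) = mpoly_vars p"
  by (simp add: mpoly_vars_def)

lemma mpoly_vars_add: "mpoly_vars (p + q) \<subseteq> mpoly_vars p \<union> mpoly_vars q"
  unfolding mpoly_vars_def using keys_add[of p q] by blast

lemma mpoly_vars_diff: "mpoly_vars (p - q) \<subseteq> mpoly_vars p \<union> mpoly_vars q"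
  using mpoly_vars_add[of p "- q"] by simp

lemma mpoly_vars_mult: "mpoly_vars (p * q) \<subseteq> mpoly_vars p \<union> mpoly_vars q"
proof
  fix x assume "x \<in> mpoly_vars (p * q)"
  then obtain m where m: "m \<in> Poly_Mapping.keys (p * q)" "x \<in> Poly_Mapping.keys m"
    unfolding mpoly_vars_def by blast
  then obtain a b where "a \<in> Poly_Mapping.keys p" "b \<in> Poly_Mapping.keys q" "m = a + b"
    using keys_mult[of p q] by blast
  with m show "x \<in> mpoly_vars p \<union> mpoly_vars q"
    unfolding mpoly_vars_def by (auto simp: keys_plus_nat)
qed

lemma keys_subset_mpoly_vars: "m \<in> Poly_Mapping.keys p \<Longrightarrow> Poly_Mapping.keys m \<subseteq> mpoly_vars p"
  unfolding mpoly_vars_def by blast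

lemma poly_ring_simps [simp]:
  "carrier (poly_ring n) = {p. mpoly_vars p \<subseteq> {..<n}}"
  "mult (poly_ring n) = (*)" "one (poly_ring n) = 1" "zero (poly_ring n) = 0"
  "add (poly_ring n) = (+)"
  by (simp_all add: poly_ring_def)

lemma cring_poly_ring: "cring (poly_ring n :: 'a::comm_ring_1 mpoly ring)"
proof (rule cringI)
  show "abelian_group (poly_ring n :: 'a mpoly ring)"
  proof (rule abelian_groupI)
    fix x assume "x \<in> carrier (poly_ring n :: 'a mpoly ring)"
    then show "\<exists>y\<in>carrier (poly_ring n). y \<oplus>\<^bsub>poly_ring n\<^esub> x = \<zero>\<^bsub>poly_ring n\<^esub>"
      by (intro bexI[of _ "- x"]) auto
  qed (use mpoly_vars_add in \<open>fastforce simp: add.assoc add.commute\<close>)+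
  show "comm_monoid (poly_ring n :: 'a mpoly ring)"
    by (rule comm_monoidI) (use mpoly_vars_mult in \<open>fastforce simp: mult.assoc mult.commute\<close>)+
qed (auto simp: distrib_right)

interpretation PR: cring "poly_ring n :: 'a::comm_ring_1 mpoly ring"
  by (rule cring_poly_ring)

lemma poly_ring_a_inv:
  "p \<in> carrier (poly_ring n) \<Longrightarrow> \<ominus>\<^bsub>poly_ring n\<^esub> p = - (p::'a::comm_ring_1 mpoly)"
  by (rule PR.add.inv_equality) auto

lemma poly_ring_a_minus:
  "p \<in> carrier (poly_ring n) \<Longrightarrow> q \<in> carrier (poly_ring n) \<Longrightarrow>
   p \<ominus>\<^bsub>poly_ring n\<^esub> q = p - (q::'a::comm_ring_1 mpoly)"
  by (simp add: a_minus_def poly_ring_a_inv)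

context
  fixes n :: nat
begin

lemma add_in_poly_ring:
  "x \<in> carrier (poly_ring n) \<Longrightarrow> y \<in> carrier (poly_ring n) \<Longrightarrow>
   (x + y :: 'a::comm_ring_1 mpoly) \<in> carrier (poly_ring n)"
  using mpoly_vars_add by fastforce

lemma diff_in_poly_ring:
  "x \<in> carrier (poly_ring n) \<Longrightarrow> y \<in> carrier (poly_ring n) \<Longrightarrow>
   (x - y :: 'a::comm_ring_1 mpoly) \<in> carrier (poly_ring n)"
  using mpoly_vars_diff by fastforce

lemma mult_in_poly_ring:
  "x \<in> carrier (poly_ring n) \<Longrightarrow> y \<in> carrier (poly_ring n) \<Longrightarrow>
   (x * y :: 'a::comm_ring_1 mpoly) \<in> carrier (poly_ring n)"
  using mpoly_vars_mult by fastforce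

lemma power_in_poly_ring:
  "x \<in> carrier (poly_ring n) \<Longrightarrow> (x ^ k :: 'a::comm_ring_1 mpoly) \<in> carrier (poly_ring n)"
  by (induction k) (use mpoly_vars_mult in fastforce)+

lemma sum_in_poly_ring:
  "(\<And>x. x \<in> S \<Longrightarrow> f x \<in> carrier (poly_ring n)) \<Longrightarrow>
   (sum f S :: 'a::comm_ring_1 mpoly) \<in> carrier (poly_ring n)"
  by (induction S rule: infinite_finite_induct) (use mpoly_vars_add in fastforce)+

lemma prod_in_poly_ring:
  "(\<And>x. x \<in> S \<Longrightarrow> f x \<in> carrier (poly_ring n)) \<Longrightarrow>
   (prod f S :: 'a::comm_ring_1 mpoly) \<in> carrier (poly_ring n)"
  by (induction S rule: infinite_finite_induct) (use mpoly_vars_mult in fastforce)+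

lemma one_in_poly_ring: "(1::'a::comm_ring_1 mpoly) \<in> carrier (poly_ring n)"
  by simp

lemma mconst_in_poly_ring: "mconst c \<in> carrier (poly_ring n)"
  by simp

lemma of_int_in_poly_ring: "(of_int c :: 'a::comm_ring_1 mpoly) \<in> carrier (poly_ring n)"
  by (metis mconst_in_poly_ring mconst_def single_of_int)

lemma mvar_in_poly_ring: "i < n \<Longrightarrow> (mvar i :: 'a::comm_ring_1 mpoly) \<in> carrier (poly_ring n)"
  by (simp add: mpoly_vars_def mvar_def)

end

lemmas poly_ring_closed =
  add_in_poly_ring diff_in_poly_ring mult_in_poly_ring power_in_poly_ring sum_in_poly_ring
  prod_in_poly_ring one_in_poly_ring mconst_in_poly_ring of_int_in_poly_ring mvar_in_poly_ring

lemma mconst_add: "mconst (a + b) = mconst a + mconst b"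
  by (simp add: mconst_def single_add)

lemma mconst_mult: "mconst (a * b) = mconst a * mconst b"
  by (simp add: mconst_def mult_single)

lemma mconst_0 [simp]: "mconst 0 = 0"
  by (simp add: mconst_def)

lemma mconst_1 [simp]: "mconst 1 = 1"
  by (simp add: mconst_def)

lemma mpoly_eq_sum_single:
  "p = (\<Sum>m\<in>Poly_Mapping.keys p. Poly_Mapping.single m (Poly_Mapping.lookup p m))"
proof (rule poly_mapping_eqI)
  fix k
  show "Poly_Mapping.lookup p k =
    Poly_Mapping.lookup (\<Sum>m\<in>Poly_Mapping.keys p. Poly_Mapping.single m (Poly_Mapping.lookup p m)) k"
    by (cases "k \<in> Poly_Mapping.keys p")
       (auto simp: lookup_sum lookup_single when_def in_keys_iff sum.delta)
qed

lemma single_power: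
  "Poly_Mapping.single (Poly_Mapping.single i (1::nat)) (1::'a::comm_ring_1) ^ k
   = Poly_Mapping.single (Poly_Mapping.single i k) 1"
proof (induction k)
  case (Suc k)
  have "Poly_Mapping.single i (Suc k) = Poly_Mapping.single i 1 + Poly_Mapping.single i k"
    by (simp add: single_add[symmetric])
  with Suc show ?case by (simp add: mult_single)
qed simp

lemma prod_single_one:
  "(\<Prod>i\<in>S. Poly_Mapping.single (f i) (1::'a::comm_ring_1)) = Poly_Mapping.single (\<Sum>i\<in>S. f i) 1"
  by (induction S rule: infinite_finite_induct) (auto simp: mult_single)

section \<open>Substitution of polynomials for the variables\<close>

definition monom_subst :: "(nat \<Rightarrow> 'a::comm_ring_1 mpoly) \<Rightarrow> (nat \<Rightarrow>\<^sub>0 nat) \<Rightarrow> 'a mpoly" where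
  "monom_subst \<sigma> m = (\<Prod>i\<in>Poly_Mapping.keys m. \<sigma> i ^ Poly_Mapping.lookup m i)"

definition mpoly_subst :: "(nat \<Rightarrow> 'a::comm_ring_1 mpoly) \<Rightarrow> 'a mpoly \<Rightarrow> 'a mpoly" where
  "mpoly_subst \<sigma> p =
     (\<Sum>m\<in>Poly_Mapping.keys p. mconst (Poly_Mapping.lookup p m) * monom_subst \<sigma> m)"

lemma monom_subst_superset:
  "finite S \<Longrightarrow> Poly_Mapping.keys m \<subseteq> S \<Longrightarrow>
   monom_subst \<sigma> m = (\<Prod>i\<in>S. \<sigma> i ^ Poly_Mapping.lookup m i)"
  unfolding monom_subst_def by (rule prod.mono_neutral_left) (auto simp: in_keys_iff)

lemma monom_subst_0 [simp]: "monom_subst \<sigma> 0 = 1"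
  by (simp add: monom_subst_def)

lemma monom_subst_plus: "monom_subst \<sigma> (a + b) = monom_subst \<sigma> a * monom_subst \<sigma> b"
proof -
  let ?S = "Poly_Mapping.keys a \<union> Poly_Mapping.keys b"
  have "monom_subst \<sigma> (a + b) = (\<Prod>i\<in>?S. \<sigma> i ^ Poly_Mapping.lookup (a + b) i)"
    by (rule monom_subst_superset) (auto simp: keys_plus_nat)
  also have "\<dots> = (\<Prod>i\<in>?S. \<sigma> i ^ Poly_Mapping.lookup a i) * (\<Prod>i\<in>?S. \<sigma> i ^ Poly_Mapping.lookup b i)"
    by (simp add: lookup_add power_add prod.distrib)
  also have "\<dots> = monom_subst \<sigma> a * monom_subst \<sigma> b"
    by (simp add: monom_subst_superset[symmetric])
  finally show ?thesis .
qed

lemma mpoly_subst_superset: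
  "finite S \<Longrightarrow> Poly_Mapping.keys p \<subseteq> S \<Longrightarrow>
   mpoly_subst \<sigma> p = (\<Sum>m\<in>S. mconst (Poly_Mapping.lookup p m) * monom_subst \<sigma> m)"
  unfolding mpoly_subst_def by (rule sum.mono_neutral_left) (auto simp: in_keys_iff)

lemma mpoly_subst_0 [simp]: "mpoly_subst \<sigma> 0 = 0"
  by (simp add: mpoly_subst_def)

lemma mpoly_subst_add: "mpoly_subst \<sigma> (p + q) = mpoly_subst \<sigma> p + mpoly_subst \<sigma> q"
proof -
  let ?S = "Poly_Mapping.keys p \<union> Poly_Mapping.keys q"
  let ?t = "\<lambda>r m. mconst (Poly_Mapping.lookup r m) * monom_subst \<sigma> m"
  have "mpoly_subst \<sigma> (p + q) = (\<Sum>m\<in>?S. ?t (p + q) m)"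
    by (rule mpoly_subst_superset) (use keys_add[of p q] in auto)
  also have "\<dots> = (\<Sum>m\<in>?S. ?t p m) + (\<Sum>m\<in>?S. ?t q m)"
    by (simp add: lookup_add mconst_add distrib_right sum.distrib)
  also have "\<dots> = mpoly_subst \<sigma> p + mpoly_subst \<sigma> q"
    by (simp add: mpoly_subst_superset[symmetric])
  finally show ?thesis .
qed

lemma mpoly_subst_uminus: "mpoly_subst \<sigma> (- p) = - mpoly_subst \<sigma> p"
  using mpoly_subst_add[of \<sigma> p "- p"] by (simp add: eq_neg_iff_add_eq_0 add.commute)

lemma mpoly_subst_diff: "mpoly_subst \<sigma> (p - q) = mpoly_subst \<sigma> p - mpoly_subst \<sigma> q"
  using mpoly_subst_add[of \<sigma> p "- q"] by (simp add: mpoly_subst_uminus)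

lemma mpoly_subst_sum: "mpoly_subst \<sigma> (sum f S) = (\<Sum>x\<in>S. mpoly_subst \<sigma> (f x))"
  by (induction S rule: infinite_finite_induct) (auto simp: mpoly_subst_add)

lemma mpoly_subst_single:
  "mpoly_subst \<sigma> (Poly_Mapping.single m c) = mconst c * monom_subst \<sigma> m"
  by (cases "c = 0") (auto simp: mpoly_subst_def)

lemma mpoly_subst_mult: "mpoly_subst \<sigma> (p * q) = mpoly_subst \<sigma> p * mpoly_subst \<sigma> q"
proof -
  let ?sp = "\<lambda>m. Poly_Mapping.single m (Poly_Mapping.lookup p m)"
  let ?sq = "\<lambda>m. Poly_Mapping.single m (Poly_Mapping.lookup q m)"
  have pq: "p * q = (\<Sum>a\<in>Poly_Mapping.keys p. \<Sum>b\<in>Poly_Mapping.keys q. ?sp a * ?sq b)"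
    by (subst mpoly_eq_sum_single[of p], subst mpoly_eq_sum_single[of q]) (simp add: sum_product)
  have "mpoly_subst \<sigma> (p * q) =
    (\<Sum>a\<in>Poly_Mapping.keys p. \<Sum>b\<in>Poly_Mapping.keys q. mpoly_subst \<sigma> (?sp a) * mpoly_subst \<sigma> (?sq b))"
    unfolding pq mpoly_subst_sum
    by (simp add: mult_single mpoly_subst_single monom_subst_plus mconst_mult mult_ac)
  also have "\<dots> = (\<Sum>a\<in>Poly_Mapping.keys p. mpoly_subst \<sigma> (?sp a)) *
                  (\<Sum>b\<in>Poly_Mapping.keys q. mpoly_subst \<sigma> (?sq b))"
    by (simp add: sum_product)
  also have "\<dots> = mpoly_subst \<sigma> p * mpoly_subst \<sigma> q"
    by (simp add: mpoly_subst_sum[symmetric] mpoly_eq_sum_single[symmetric])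
  finally show ?thesis .
qed

lemma mpoly_subst_1 [simp]: "mpoly_subst \<sigma> 1 = 1"
  by (metis mpoly_subst_single mconst_1 monom_subst_0 mult_1 single_one)

lemma mpoly_subst_mconst [simp]: "mpoly_subst \<sigma> (mconst c) = mconst c"
  by (simp add: mconst_def mpoly_subst_single)

lemma mpoly_subst_of_int [simp]: "mpoly_subst \<sigma> (of_int c) = of_int c"
  by (metis mpoly_subst_mconst mconst_def single_of_int)

lemma mpoly_subst_mvar [simp]: "mpoly_subst \<sigma> (mvar i) = \<sigma> i"
  by (simp add: mvar_def mpoly_subst_single monom_subst_def)

lemma mpoly_subst_power: "mpoly_subst \<sigma> (p ^ k) = mpoly_subst \<sigma> p ^ k"
  by (induction k) (auto simp: mpoly_subst_mult)

lemma mpoly_subst_prod: "mpoly_subst \<sigma> (prod f S) = (\<Prod>x\<in>S. mpoly_subst \<sigma> (f x))"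
  by (induction S rule: infinite_finite_induct) (auto simp: mpoly_subst_mult)

lemma mpoly_subst_mvar_id: "mpoly_subst mvar p = p"
proof -
  have "monom_subst mvar m = (Poly_Mapping.single m 1 :: 'a mpoly)" for m
  proof -
    have "monom_subst mvar m = (\<Prod>i\<in>Poly_Mapping.keys m.
            Poly_Mapping.single (Poly_Mapping.single i (Poly_Mapping.lookup m i)) (1::'a))"
      unfolding monom_subst_def mvar_def by (intro prod.cong refl) (rule single_power)
    also have "\<dots> = Poly_Mapping.single m 1"
      by (simp add: prod_single_one mpoly_eq_sum_single[symmetric])
    finally show ?thesis .
  qed
  then have "mpoly_subst mvar p = (\<Sum>m\<in>Poly_Mapping.keys p. Poly_Mapping.single m (Poly_Mapping.lookup p m))"
    unfolding mpoly_subst_def by (simp add: mconst_def mult_single)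
  then show ?thesis
    by (simp add: mpoly_eq_sum_single[symmetric])
qed

lemma mpoly_subst_mpoly_subst:
  "mpoly_subst \<tau> (mpoly_subst \<sigma> p) = mpoly_subst (\<lambda>i. mpoly_subst \<tau> (\<sigma> i)) p"
  unfolding mpoly_subst_def[of \<sigma>]
  by (simp add: mpoly_subst_sum mpoly_subst_mult monom_subst_def mpoly_subst_prod mpoly_subst_power
      mpoly_subst_def[of "\<lambda>i. mpoly_subst \<tau> (\<sigma> i)"])

lemma mpoly_subst_cong:
  "(\<And>i. i \<in> mpoly_vars p \<Longrightarrow> \<sigma> i = \<tau> i) \<Longrightarrow> mpoly_subst \<sigma> p = mpoly_subst \<tau> p"
  unfolding mpoly_subst_def monom_subst_def
  by (intro sum.cong refl arg_cong2[where f="(*)"] prod.cong) (metis mpoly_vars_def UN_I)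

lemma mpoly_subst_inverse:
  assumes "\<And>i. i \<in> mpoly_vars p \<Longrightarrow> mpoly_subst \<tau> (\<sigma> i) = mvar i"
  shows "mpoly_subst \<tau> (mpoly_subst \<sigma> p) = p"
proof -
  have "mpoly_subst \<tau> (mpoly_subst \<sigma> p) = mpoly_subst mvar p"
    unfolding mpoly_subst_mpoly_subst by (rule mpoly_subst_cong) (rule assms)
  then show ?thesis
    by (simp add: mpoly_subst_mvar_id)
qed

lemma mpoly_subst_in_poly_ring:
  assumes "p \<in> carrier (poly_ring n)" "\<And>i. i < n \<Longrightarrow> \<sigma> i \<in> carrier (poly_ring n)"
  shows "mpoly_subst \<sigma> (p :: 'a::comm_ring_1 mpoly) \<in> carrier (poly_ring n)"
  unfolding mpoly_subst_def monom_subst_def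
proof (intro poly_ring_closed)
  fix m i assume "m \<in> Poly_Mapping.keys p" "i \<in> Poly_Mapping.keys m"
  then have "i < n" using assms(1) keys_subset_mpoly_vars by fastforce
  then show "\<sigma> i \<in> carrier (poly_ring n)" by (rule assms(2))
qed

lemma mpoly_subst_ring_hom:
  assumes "\<And>i. i < n \<Longrightarrow> \<sigma> i \<in> carrier (poly_ring n)"
  shows "mpoly_subst \<sigma> \<in> ring_hom (poly_ring n) (poly_ring n :: 'a::comm_ring_1 mpoly ring)"
proof (rule ring_hom_memI)
  fix x assume "x \<in> carrier (poly_ring n :: 'a mpoly ring)"
  then show "mpoly_subst \<sigma> x \<in> carrier (poly_ring n)"
    by (rule mpoly_subst_in_poly_ring) (rule assms)
qed (auto simp: mpoly_subst_mult mpoly_subst_add)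

definition monom_deg :: "(nat \<Rightarrow>\<^sub>0 nat) \<Rightarrow> nat" where
  "monom_deg m = (\<Sum>i\<in>Poly_Mapping.keys m. Poly_Mapping.lookup m i)"

lemma monom_deg_single [simp]: "monom_deg (Poly_Mapping.single i k) = k"
  by (simp add: monom_deg_def)

lemma monom_deg_plus: "monom_deg (a + b) = monom_deg a + monom_deg b"
proof -
  let ?S = "Poly_Mapping.keys a \<union> Poly_Mapping.keys b"
  have deg: "monom_deg m = (\<Sum>i\<in>?S. Poly_Mapping.lookup m i)" if "Poly_Mapping.keys m \<subseteq> ?S" for m
    unfolding monom_deg_def by (rule sum.mono_neutral_left) (use that in \<open>auto simp: in_keys_iff\<close>)
  have "monom_deg (a + b) = (\<Sum>i\<in>?S. Poly_Mapping.lookup (a + b) i)"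
    by (rule deg) (simp add: keys_plus_nat)
  also have "\<dots> = (\<Sum>i\<in>?S. Poly_Mapping.lookup a i) + (\<Sum>i\<in>?S. Poly_Mapping.lookup b i)"
    by (simp add: lookup_add sum.distrib)
  finally show ?thesis
    by (simp add: deg)
qed

lemma homogeneous_iff_monom_deg:
  "homogeneous k p \<longleftrightarrow> (\<forall>m\<in>Poly_Mapping.keys p. monom_deg m = k)"
  by (simp add: homogeneous_def monom_deg_def)

lemma homogeneous_0 [simp]: "homogeneous k 0"
  by (simp add: homogeneous_iff_monom_deg)

lemma homogeneous_add: "homogeneous k p \<Longrightarrow> homogeneous k q \<Longrightarrow> homogeneous k (p + q)"
  unfolding homogeneous_iff_monom_deg using keys_add[of p q] by blast

lemma homogeneous_uminus: "homogeneous k p \<Longrightarrow> homogeneous k (- p)"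
  by (simp add: homogeneous_iff_monom_deg)

lemma homogeneous_diff: "homogeneous k p \<Longrightarrow> homogeneous k q \<Longrightarrow> homogeneous k (p - q)"
  using homogeneous_add[OF _ homogeneous_uminus, of k p q] by simp

lemma homogeneous_sum: "(\<And>x. x \<in> S \<Longrightarrow> homogeneous k (f x)) \<Longrightarrow> homogeneous k (sum f S)"
  by (induction S rule: infinite_finite_induct) (auto intro: homogeneous_add)

lemma homogeneous_mult:
  "homogeneous a p \<Longrightarrow> homogeneous b q \<Longrightarrow> homogeneous (a + b) (p * q)"
  unfolding homogeneous_iff_monom_deg using keys_mult[of p q] by (fastforce simp: monom_deg_plus)

lemma homogeneous_1: "homogeneous 0 (1::'a::comm_ring_1 mpoly)"
  by (simp add: homogeneous_iff_monom_deg monom_deg_def)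

lemma homogeneous_mconst: "homogeneous 0 (mconst c)"
  by (simp add: homogeneous_iff_monom_deg monom_deg_def mconst_def)

lemma homogeneous_of_int: "homogeneous 0 (of_int c :: 'a::comm_ring_1 mpoly)"
  by (metis homogeneous_mconst mconst_def single_of_int)

lemma homogeneous_mvar: "homogeneous 1 (mvar i :: 'a::comm_ring_1 mpoly)"
  by (simp add: homogeneous_iff_monom_deg mvar_def)

lemma homogeneous_scaled_mvar: "homogeneous 1 (of_int c * mvar i :: 'a::comm_ring_1 mpoly)"
  using homogeneous_mult[OF homogeneous_of_int homogeneous_mvar] by simp

lemma homogeneous_power: "homogeneous a p \<Longrightarrow> homogeneous (k * a) (p ^ k)"
  by (induction k) (auto simp: homogeneous_1 intro: homogeneous_mult)

lemma homogeneous_prod: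
  "(\<And>x. x \<in> S \<Longrightarrow> homogeneous (g x) (f x)) \<Longrightarrow>
   homogeneous (\<Sum>x\<in>S. g x) (prod f S :: 'a::comm_ring_1 mpoly)"
  by (induction S rule: infinite_finite_induct) (auto simp: homogeneous_1 intro: homogeneous_mult)

lemma homogeneous_mpoly_subst:
  assumes "homogeneous k p" "\<And>i. homogeneous 1 (\<sigma> i)"
  shows "homogeneous k (mpoly_subst \<sigma> (p :: 'a::comm_ring_1 mpoly))"
  unfolding mpoly_subst_def
proof (rule homogeneous_sum)
  fix m assume m: "m \<in> Poly_Mapping.keys p"
  have "homogeneous (0 + monom_deg m) (mconst (Poly_Mapping.lookup p m) * monom_subst \<sigma> m)"
    unfolding monom_subst_def monom_deg_def
    by (intro homogeneous_mult homogeneous_mconst homogeneous_prod)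
       (use homogeneous_power[OF assms(2)] in simp)
  with m assms(1) show "homogeneous k (mconst (Poly_Mapping.lookup p m) * monom_subst \<sigma> m)"
    by (simp add: homogeneous_iff_monom_deg)
qed

lemma homogeneous_bott_alpha: "homogeneous 1 (bott_alpha A j :: 'a::comm_ring_1 mpoly)"
  unfolding bott_alpha_def by (intro homogeneous_sum homogeneous_scaled_mvar)

context
  fixes I :: "'a::comm_ring_1 mpoly set" and n :: nat
  assumes I: "ideal I (poly_ring n)"
begin

lemma poly_ideal_zero: "0 \<in> I"
  using additive_subgroup.zero_closed[of I "poly_ring n"] ideal.axioms(1)[OF I] by simp

lemma poly_ideal_add: "a \<in> I \<Longrightarrow> b \<in> I \<Longrightarrow> a + b \<in> I"
  using additive_subgroup.a_closed[of I "poly_ring n" a b] ideal.axioms(1)[OF I] by simp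

lemma poly_ideal_diff: "a \<in> I \<Longrightarrow> b \<in> I \<Longrightarrow> a - b \<in> I"
  using poly_ideal_add[of a "- b"] ideal.Icarr[OF I]
    additive_subgroup.a_inv_closed[OF ideal.axioms(1)[OF I], of b] poly_ring_a_inv
  by fastforce

lemma poly_ideal_mult: "a \<in> I \<Longrightarrow> x \<in> carrier (poly_ring n) \<Longrightarrow> x * a \<in> I"
  using ideal.I_l_closed[OF I, of a x] by simp

lemma prod_diff_in_poly_ideal:
  assumes "\<And>k. k \<in> S \<Longrightarrow> f k \<in> carrier (poly_ring n) \<and> g k \<in> carrier (poly_ring n) \<and> f k - g k \<in> I"
  shows "prod f S - prod g S \<in> I"
  using assms
proof (induction S rule: infinite_finite_induct)
  case (insert a S)
  have "prod f (insert a S) - prod g (insert a S) = f a * (prod f S - prod g S) + prod g S * (f a - g a)"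
    using insert(1,2) by (simp add: algebra_simps)
  moreover have "prod g S \<in> carrier (poly_ring n)"
    by (rule prod_in_poly_ring) (use insert in auto)
  ultimately show ?case
    by (metis insert insert_iff poly_ideal_add poly_ideal_mult)
qed (simp_all add: poly_ideal_zero)

lemma rcos_eq_iff_diff_in_poly_ideal:
  assumes "p \<in> carrier (poly_ring n)" "q \<in> carrier (poly_ring n)"
  shows "I +>\<^bsub>poly_ring n\<^esub> p = I +>\<^bsub>poly_ring n\<^esub> q \<longleftrightarrow> p - q \<in> I"
proof -
  interpret ideal I "poly_ring n" by (rule I)
  have "p \<in> I +>\<^bsub>poly_ring n\<^esub> q \<longleftrightarrow> p - q \<in> I"
    using a_rcos_module_minus[OF PR.ring_axioms] assms poly_ring_a_minus[OF assms] by auto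
  with assms show ?thesis
    using a_repr_independenceD[of p q] a_repr_independence'[of p q] by auto
qed

end

definition bott_relations :: "nat \<Rightarrow> (nat \<Rightarrow> nat \<Rightarrow> int) \<Rightarrow> 'a::comm_ring_1 mpoly set" where
  "bott_relations n A = {mvar j ^ 2 - bott_alpha A j * mvar j | j. j < n}"

lemma bott_ideal_eq_genideal: "bott_ideal n A = genideal (poly_ring n) (bott_relations n A)"
  by (simp add: bott_ideal_def bott_relations_def)

lemma bott_alpha_in_poly_ring:
  "j \<le> n \<Longrightarrow> (bott_alpha A j :: 'a::comm_ring_1 mpoly) \<in> carrier (poly_ring n)"
  unfolding bott_alpha_def by (intro poly_ring_closed) auto

lemma bott_relations_subset_poly_ring:
  "bott_relations n A \<subseteq> (carrier (poly_ring n) :: 'a::comm_ring_1 mpoly set)"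
  unfolding bott_relations_def
  by (auto intro!: poly_ring_closed bott_alpha_in_poly_ring simp del: poly_ring_simps(1))

lemma ideal_bott_ideal: "ideal (bott_ideal n A :: 'a::comm_ring_1 mpoly set) (poly_ring n)"
  unfolding bott_ideal_eq_genideal by (rule PR.genideal_ideal[OF bott_relations_subset_poly_ring])

lemma bott_ideal_subset_poly_ring:
  "bott_ideal n A \<subseteq> (carrier (poly_ring n) :: 'a::comm_ring_1 mpoly set)"
  using ideal.Icarr[OF ideal_bott_ideal] by blast

lemma bott_relation_in_bott_ideal:
  "j < n \<Longrightarrow> mvar j ^ 2 - bott_alpha A j * mvar j \<in> (bott_ideal n A :: 'a::comm_ring_1 mpoly set)"
  unfolding bott_ideal_eq_genideal
  by (rule subsetD[OF PR.genideal_self[OF bott_relations_subset_poly_ring]])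
     (auto simp: bott_relations_def)

lemma cohom_class_eq_iff:
  "p \<in> carrier (poly_ring n) \<Longrightarrow> q \<in> carrier (poly_ring n) \<Longrightarrow>
   cohom_class n A p = cohom_class n A q \<longleftrightarrow> p - q \<in> (bott_ideal n A :: 'a::comm_ring_1 mpoly set)"
  unfolding cohom_class_def by (rule rcos_eq_iff_diff_in_poly_ideal[OF ideal_bott_ideal])

lemma ring_cohom: "ring (cohom n A :: 'a::comm_ring_1 mpoly set ring)"
  unfolding cohom_def by (rule ideal.quotient_is_ring[OF ideal_bott_ideal])

lemma cohom_class_ring_hom:
  "cohom_class n A \<in> ring_hom (poly_ring n) (cohom n A :: 'a::comm_ring_1 mpoly set ring)"
  unfolding cohom_def cohom_class_def[abs_def] by (rule ideal.rcos_ring_hom[OF ideal_bott_ideal])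

lemma carrier_cohom:
  "carrier (cohom n A) = cohom_class n A ` (carrier (poly_ring n) :: 'a::comm_ring_1 mpoly set)"
  unfolding cohom_def cohom_class_def FactRing_def A_RCOSETS_def' by auto

lemma cohom_class_eq_zero_iff:
  assumes "p \<in> carrier (poly_ring n)"
  shows "cohom_class n A p = \<zero>\<^bsub>cohom n A\<^esub> \<longleftrightarrow> p \<in> (bott_ideal n A :: 'a::comm_ring_1 mpoly set)"
proof -
  have "\<zero>\<^bsub>cohom n A\<^esub> = cohom_class n A (0::'a mpoly)"
    using ring_hom_zero[OF cohom_class_ring_hom[of n A, where 'a='a] PR.ring_axioms ring_cohom] by simp
  with cohom_class_eq_iff[OF assms, of 0 A] show ?thesis
    by simp
qed

section \<open>Isomorphisms of cohomology rings induced by substitutions\<close>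

lemma mpoly_subst_bott_ideal:
  assumes "\<And>i. i < n \<Longrightarrow> \<sigma> i \<in> carrier (poly_ring n)"
    and "\<And>g. g \<in> bott_relations n A \<Longrightarrow> mpoly_subst \<sigma> g \<in> bott_ideal n B"
    and "p \<in> bott_ideal n A"
  shows "mpoly_subst \<sigma> p \<in> (bott_ideal n B :: 'a::comm_ring_1 mpoly set)"
proof -
  interpret H: ring_hom_ring "poly_ring n" "poly_ring n :: 'a mpoly ring" "mpoly_subst \<sigma>"
    by (rule ring_hom_ringI2[OF PR.ring_axioms PR.ring_axioms mpoly_subst_ring_hom[OF assms(1)]])
  have "ideal {r \<in> carrier (poly_ring n). mpoly_subst \<sigma> r \<in> bott_ideal n B} (poly_ring n)"
    by (rule H.ideal_vimage[OF ideal_bott_ideal])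
  then have "bott_ideal n A \<subseteq> {r \<in> carrier (poly_ring n). mpoly_subst \<sigma> r \<in> (bott_ideal n B :: 'a mpoly set)}"
    unfolding bott_ideal_eq_genideal[of n A]
    by (rule PR.genideal_minimal) (use bott_relations_subset_poly_ring assms(2) in auto)
  with assms(3) show ?thesis
    by blast
qed

context
  fixes n :: nat and A B :: "nat \<Rightarrow> nat \<Rightarrow> int" and \<sigma> \<tau> :: "nat \<Rightarrow> 'a::comm_ring_1 mpoly"
  assumes \<sigma>_in: "\<And>i. i < n \<Longrightarrow> \<sigma> i \<in> carrier (poly_ring n)"
    and \<tau>_in: "\<And>i. i < n \<Longrightarrow> \<tau> i \<in> carrier (poly_ring n)"
    and \<tau>_\<sigma>: "\<And>i. i < n \<Longrightarrow> mpoly_subst \<tau> (\<sigma> i) = mvar i"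
    and \<sigma>_\<tau>: "\<And>i. i < n \<Longrightarrow> mpoly_subst \<sigma> (\<tau> i) = mvar i"
    and \<sigma>_rel: "\<And>g. g \<in> bott_relations n A \<Longrightarrow> mpoly_subst \<sigma> g \<in> bott_ideal n B"
    and \<tau>_rel: "\<And>g. g \<in> bott_relations n B \<Longrightarrow> mpoly_subst \<tau> g \<in> bott_ideal n A"
begin

lemma mpoly_subst_inverse_on_poly_ring:
  "p \<in> carrier (poly_ring n) \<Longrightarrow> mpoly_subst \<tau> (mpoly_subst \<sigma> p) = p"
  "p \<in> carrier (poly_ring n) \<Longrightarrow> mpoly_subst \<sigma> (mpoly_subst \<tau> p) = p"
  by (auto intro!: mpoly_subst_inverse \<tau>_\<sigma> \<sigma>_\<tau>)

lemma mpoly_subst_preimage_bott_ideal: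
  "{r \<in> carrier (poly_ring n). mpoly_subst \<sigma> r \<in> bott_ideal n B} = bott_ideal n A"
proof
  show "{r \<in> carrier (poly_ring n). mpoly_subst \<sigma> r \<in> bott_ideal n B} \<subseteq> bott_ideal n A"
  proof clarify
    fix r assume r: "r \<in> carrier (poly_ring n)" "mpoly_subst \<sigma> r \<in> bott_ideal n B"
    have "mpoly_subst \<tau> (mpoly_subst \<sigma> r) \<in> bott_ideal n A"
      by (rule mpoly_subst_bott_ideal[OF \<tau>_in \<tau>_rel r(2)])
    with r(1) show "r \<in> bott_ideal n A"
      by (simp add: mpoly_subst_inverse_on_poly_ring)
  qed
  show "bott_ideal n A \<subseteq> {r \<in> carrier (poly_ring n). mpoly_subst \<sigma> r \<in> bott_ideal n B}"
    using mpoly_subst_bott_ideal[OF \<sigma>_in \<sigma>_rel] bott_ideal_subset_poly_ring by blast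
qed

lemma cohom_iso_of_mpoly_subst:
  obtains \<psi> where "\<psi> \<in> ring_iso (cohom n A) (cohom n B)"
    and "\<And>p. p \<in> carrier (poly_ring n) \<Longrightarrow> \<psi> (cohom_class n A p) = cohom_class n B (mpoly_subst \<sigma> p)"
proof -
  define h where "h = cohom_class n B \<circ> mpoly_subst \<sigma>"
  have h_hom: "h \<in> ring_hom (poly_ring n) (cohom n B)"
    unfolding h_def by (rule ring_hom_trans[OF mpoly_subst_ring_hom[OF \<sigma>_in] cohom_class_ring_hom])
  interpret H: ring_hom_ring "poly_ring n" "cohom n B" h
    by (rule ring_hom_ringI2[OF PR.ring_axioms ring_cohom h_hom])
  have "h r = \<zero>\<^bsub>cohom n B\<^esub> \<longleftrightarrow> mpoly_subst \<sigma> r \<in> bott_ideal n B" if "r \<in> carrier (poly_ring n)" for r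
    unfolding h_def comp_def by (rule cohom_class_eq_zero_iff[OF mpoly_subst_in_poly_ring[OF that \<sigma>_in]])
  then have kernel: "a_kernel (poly_ring n) (cohom n B) h = bott_ideal n A"
    unfolding a_kernel_def' mpoly_subst_preimage_bott_ideal[symmetric] by blast
  have "h ` carrier (poly_ring n) = carrier (cohom n B)"
  proof
    show "h ` carrier (poly_ring n) \<subseteq> carrier (cohom n B)"
      using ring_hom_closed[OF h_hom] by (intro image_subsetI)
    show "carrier (cohom n B) \<subseteq> h ` carrier (poly_ring n)"
    proof
      fix X :: "'a mpoly set" assume "X \<in> carrier (cohom n B)"
      then obtain q where q: "q \<in> carrier (poly_ring n)" "X = cohom_class n B q"
        unfolding carrier_cohom by blast
      then have "X = h (mpoly_subst \<tau> q)"
        by (simp add: h_def mpoly_subst_inverse_on_poly_ring(2) del: poly_ring_simps(1))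
      with mpoly_subst_in_poly_ring[OF q(1) \<tau>_in] show "X \<in> h ` carrier (poly_ring n)"
        by (rule rev_image_eqI)
    qed
  qed
  from H.FactRing_iso_set[OF this] have "(\<lambda>X. the_elem (h ` X)) \<in> ring_iso (cohom n A) (cohom n B)"
    unfolding kernel by (simp add: cohom_def[of n A])
  moreover have "the_elem (h ` cohom_class n A p) = cohom_class n B (mpoly_subst \<sigma> p)"
    if "p \<in> carrier (poly_ring n)" for p
    using H.the_elem_simp[OF that] unfolding kernel by (simp add: cohom_class_def h_def)
  ultimately show ?thesis
    using that by blast
qed

end

lemma image_cohom_deg_mpoly_subst:
  assumes \<psi>: "\<And>p. p \<in> carrier (poly_ring n) \<Longrightarrow> \<psi> (cohom_class n A p) = cohom_class n B (mpoly_subst \<sigma> p)"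
    and \<sigma>_in: "\<And>i. i < n \<Longrightarrow> \<sigma> i \<in> carrier (poly_ring n)"
    and \<sigma>_linear: "\<And>i. homogeneous 1 (\<sigma> i)"
  shows "\<psi> ` cohom_deg n A d \<subseteq> cohom_deg n B d"
proof
  fix Y assume "Y \<in> \<psi> ` cohom_deg n A d"
  then obtain p where p: "p \<in> carrier (poly_ring n)" "p = 0 \<or> (even d \<and> homogeneous (d div 2) p)"
    and Y: "Y = cohom_class n B (mpoly_subst \<sigma> p)"
    unfolding cohom_deg_def using \<psi> by blast
  moreover have "mpoly_subst \<sigma> p \<in> carrier (poly_ring n)"
    using mpoly_subst_in_poly_ring[OF p(1) \<sigma>_in] .
  ultimately show "Y \<in> cohom_deg n B d"
    unfolding cohom_deg_def using homogeneous_mpoly_subst[OF _ \<sigma>_linear] by auto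
qed

section \<open>Linear coefficients and alphas of even exceptional type\<close>

definition order_ge_2 :: "nat \<Rightarrow> 'a::comm_ring_1 mpoly set" where
  "order_ge_2 n = {p \<in> carrier (poly_ring n). \<forall>m\<in>Poly_Mapping.keys p. 2 \<le> monom_deg m}"

lemma ideal_order_ge_2: "ideal (order_ge_2 n :: 'a::comm_ring_1 mpoly set) (poly_ring n)"
proof (rule idealI[OF PR.ring_axioms])
  show "subgroup (order_ge_2 n :: 'a mpoly set) (add_monoid (poly_ring n))"
  proof (rule group.subgroupI[OF PR.add.group_axioms])
    show "order_ge_2 n \<subseteq> carrier (add_monoid (poly_ring n :: 'a mpoly ring))"
      by (auto simp: order_ge_2_def)
    show "order_ge_2 n \<noteq> ({} :: 'a mpoly set)"
      unfolding order_ge_2_def by (intro ex_in_conv[THEN iffD1] exI[of _ 0]) simp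
    fix a b :: "'a mpoly" assume a: "a \<in> order_ge_2 n" and b: "b \<in> order_ge_2 n"
    have "inv\<^bsub>add_monoid (poly_ring n)\<^esub> a = - a"
      using poly_ring_a_inv[of a n] a unfolding order_ge_2_def a_inv_def by simp
    with a show "inv\<^bsub>add_monoid (poly_ring n)\<^esub> a \<in> order_ge_2 n"
      by (auto simp: order_ge_2_def)
    show "a \<otimes>\<^bsub>add_monoid (poly_ring n)\<^esub> b \<in> order_ge_2 n"
      using a b keys_add[of a b] add_in_poly_ring[of a n b] by (auto simp: order_ge_2_def)
  qed
next
  fix a x :: "'a mpoly" assume a: "a \<in> order_ge_2 n" and x: "x \<in> carrier (poly_ring n)"
  have "x * a \<in> order_ge_2 n"
    unfolding order_ge_2_def
  proof (intro CollectI conjI ballI)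
    show "x * a \<in> carrier (poly_ring n)"
      using mult_in_poly_ring[OF x] a by (auto simp: order_ge_2_def)
    fix m assume "m \<in> Poly_Mapping.keys (x * a)"
    then obtain u v where "u \<in> Poly_Mapping.keys x" "v \<in> Poly_Mapping.keys a" "m = u + v"
      using keys_mult[of x a] by blast
    with a show "2 \<le> monom_deg m"
      by (auto simp: order_ge_2_def monom_deg_plus)
  qed
  then show "x \<otimes>\<^bsub>poly_ring n\<^esub> a \<in> order_ge_2 n" "a \<otimes>\<^bsub>poly_ring n\<^esub> x \<in> order_ge_2 n"
    by (simp_all add: mult.commute)
qed

lemma bott_ideal_subset_order_ge_2: "bott_ideal n A \<subseteq> (order_ge_2 n :: 'a::comm_ring_1 mpoly set)"
  unfolding bott_ideal_eq_genideal
proof (rule PR.genideal_minimal[OF ideal_order_ge_2], rule subsetI)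
  fix g :: "'a mpoly" assume g: "g \<in> bott_relations n A"
  then obtain j where "g = mvar j ^ 2 - bott_alpha A j * mvar j"
    unfolding bott_relations_def by blast
  moreover have "homogeneous (2 * 1) (mvar j ^ 2 :: 'a mpoly)"
    by (rule homogeneous_power[OF homogeneous_mvar])
  moreover have "homogeneous (1 + 1) (bott_alpha A j * mvar j :: 'a mpoly)"
    by (rule homogeneous_mult[OF homogeneous_bott_alpha homogeneous_mvar])
  ultimately have "homogeneous 2 g"
    unfolding mult_1_right one_add_one by (simp add: homogeneous_diff)
  with g bott_relations_subset_poly_ring show "g \<in> order_ge_2 n"
    by (fastforce simp: order_ge_2_def homogeneous_iff_monom_deg simp del: poly_ring_simps(1))
qed

definition lin_coeff :: "nat \<Rightarrow> 'a::comm_ring_1 mpoly \<Rightarrow> 'a" where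
  "lin_coeff l p = Poly_Mapping.lookup p (Poly_Mapping.single l 1)"

lemma lin_coeff_order_ge_2: "p \<in> order_ge_2 n \<Longrightarrow> lin_coeff l p = 0"
  unfolding order_ge_2_def lin_coeff_def by (auto simp: in_keys_iff dest!: bspec)

lemma lin_coeff_diff: "lin_coeff l (p - q) = lin_coeff l p - lin_coeff l q"
  by (simp add: lin_coeff_def lookup_minus)

lemma lin_coeff_sum: "lin_coeff l (sum f S) = (\<Sum>x\<in>S. lin_coeff l (f x))"
  by (simp add: lin_coeff_def lookup_sum)

lemma lin_coeff_mconst_mult: "lin_coeff l (mconst c * p) = c * lin_coeff l p"
proof -
  have "mconst c * p = Poly_Mapping.map ((*) c) p"
    by (simp add: mconst_def mult_map_scale_conv_mult)
  then show ?thesis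
    by (simp add: lin_coeff_def map.rep_eq when_def)
qed

lemma lin_coeff_of_int_mult: "lin_coeff l (of_int c * p) = of_int c * lin_coeff l p"
  by (metis lin_coeff_mconst_mult mconst_def single_of_int)

lemma lin_coeff_mvar: "lin_coeff l (mvar i) = (if i = l then 1 else 0)"
proof -
  have "Poly_Mapping.single i (1::nat) = Poly_Mapping.single l 1 \<longleftrightarrow> i = l"
    by (metis lookup_single_eq lookup_single_not_eq one_neq_zero)
  then show ?thesis
    by (auto simp: lin_coeff_def mvar_def lookup_single when_def)
qed

lemma lin_coeff_bott_alpha:
  assumes "bott_matrix n A"
  shows "lin_coeff l (bott_alpha A j) = of_int (A l j)"
proof -
  have "lin_coeff l (bott_alpha A j) = (\<Sum>x<j. if x = l then (of_int (A l j) :: 'a) else 0)"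
    unfolding bott_alpha_def lin_coeff_sum lin_coeff_of_int_mult lin_coeff_mvar
    by (rule sum.cong) auto
  also have "\<dots> = of_int (A l j)"
    using assms by (cases "l < j") (force simp: bott_matrix_def)+
  finally show ?thesis .
qed

definition even_exc_pattern :: "(nat \<Rightarrow> nat \<Rightarrow> int) \<Rightarrow> nat \<Rightarrow> nat \<Rightarrow> int \<Rightarrow> bool" where
  "even_exc_pattern B j i m \<longleftrightarrow>
     i < j \<and> m \<noteq> 0 \<and> (\<forall>l. B l j = (if l = i then 2 * m else 0) - m * B l i)"

definition even_exc_free :: "(nat \<Rightarrow> nat \<Rightarrow> int) \<Rightarrow> nat \<Rightarrow> bool" where
  "even_exc_free B p \<longleftrightarrow> (\<forall>k<p. \<forall>i m. \<not> even_exc_pattern B k i m)"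

lemma even_exc_pattern_cong:
  assumes "\<And>l k. k \<le> j \<Longrightarrow> B l k = C l k"
  shows "even_exc_pattern B j i m \<longleftrightarrow> even_exc_pattern C j i m"
  unfolding even_exc_pattern_def using assms[of j] assms[of i] by auto

lemma even_exceptional_imp_pattern:
  assumes B: "bott_matrix n B" and j: "j < n" and exc: "even_exceptional n B j"
  shows "\<exists>i m. even_exc_pattern B j i m"
proof -
  obtain c :: int and i where i: "i < j" and c: "c \<noteq> 0" "even c"
    and eq: "cohom_class n B (bott_alpha B j :: rat mpoly) = cohom_class n B (of_int c * bott_y B i)"
    using exc unfolding even_exceptional_def by blast
  obtain m where m: "c = 2 * m"
    using c(2) by blast
  have "bott_alpha B j \<in> (carrier (poly_ring n) :: rat mpoly set)"
    using j by (simp add: bott_alpha_in_poly_ring del: poly_ring_simps(1))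
  moreover have "of_int c * bott_y B i \<in> carrier (poly_ring n)"
    using i j unfolding bott_y_def
    by (intro poly_ring_closed bott_alpha_in_poly_ring) auto
  ultimately have "bott_alpha B j - of_int c * bott_y B i \<in> (bott_ideal n B :: rat mpoly set)"
    using eq cohom_class_eq_iff by blast
  then have "lin_coeff l (bott_alpha B j - of_int c * bott_y B i) = 0" for l
    using bott_ideal_subset_order_ge_2 lin_coeff_order_ge_2 by blast
  then have "(of_int (B l j) :: rat) = of_int c * ((if i = l then 1 else 0) - 1/2 * of_int (B l i))" for l
    unfolding lin_coeff_diff lin_coeff_of_int_mult bott_y_def lin_coeff_mconst_mult
      lin_coeff_bott_alpha[OF B] lin_coeff_mvar
    by (simp add: lin_coeff_def lookup_minus)
  then have "(of_int (B l j) :: rat) = of_int ((if l = i then 2 * m else 0) - m * B l i)" for l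
    by (auto simp: m algebra_simps)
  then show ?thesis
    using i c m unfolding even_exc_pattern_def of_int_eq_iff by auto
qed

definition lin_comb :: "nat \<Rightarrow> (nat \<Rightarrow> int) \<Rightarrow> 'a::comm_ring_1 mpoly" where
  "lin_comb n c = (\<Sum>l<n. of_int (c l) * mvar l)"

lemma bott_alpha_eq_lin_comb:
  assumes "bott_matrix n A" "k < n"
  shows "bott_alpha A k = lin_comb n (\<lambda>l. A l k)"
proof -
  have "A l k = 0" if "\<not> l < k" for l
    using assms(1) that unfolding bott_matrix_def by force
  then show ?thesis
    unfolding bott_alpha_def lin_comb_def by (intro sum.mono_neutral_left) (use assms(2) in auto)
qed

lemma lin_comb_add: "lin_comb n (\<lambda>l. c l + d l) = lin_comb n c + lin_comb n d"
  by (simp add: lin_comb_def sum.distrib distrib_right)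

lemma lin_comb_delta: "i < n \<Longrightarrow> lin_comb n (\<lambda>l. if l = i then a else 0) = of_int a * mvar i"
  unfolding lin_comb_def by (simp add: if_distrib[of "\<lambda>x. of_int x * _"] sum.delta cong: if_cong)

definition shear :: "nat \<Rightarrow> nat \<Rightarrow> 'a::comm_ring_1 mpoly \<Rightarrow> nat \<Rightarrow> 'a mpoly" where
  "shear j i M k = (if k = j then mvar j + M * mvar i else mvar k)"

lemma shear_in_poly_ring:
  "i < n \<Longrightarrow> j < n \<Longrightarrow> k < n \<Longrightarrow> M \<in> carrier (poly_ring n) \<Longrightarrow> shear j i M k \<in> carrier (poly_ring n)"
  unfolding shear_def by (auto intro!: poly_ring_closed simp del: poly_ring_simps(1))

lemma homogeneous_shear: "homogeneous 0 M \<Longrightarrow> homogeneous 1 (shear j i M k)"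
  unfolding shear_def using homogeneous_mvar homogeneous_mult[OF _ homogeneous_mvar, of 0 M]
  by (auto intro: homogeneous_add)

lemma mpoly_subst_shear_shear:
  assumes "i \<noteq> j"
  shows "mpoly_subst (shear j i (- of_int c)) (shear j i (of_int c) k) = mvar k"
    and "mpoly_subst (shear j i (of_int c)) (shear j i (- of_int c) k) = mvar k"
  using assms by (simp_all add: shear_def mpoly_subst_add mpoly_subst_diff mpoly_subst_mult)

lemma mpoly_subst_shear_lin_comb:
  assumes "j < n"
  shows "mpoly_subst (shear j i M) (lin_comb n c) = lin_comb n c + of_int (c j) * M * mvar i"
proof -
  have "mpoly_subst (shear j i M) (lin_comb n c) = (\<Sum>l<n. of_int (c l) * shear j i M l)"
    by (simp add: lin_comb_def mpoly_subst_sum mpoly_subst_mult)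
  also have "\<dots> = (\<Sum>l<n. of_int (c l) * mvar l + (if l = j then of_int (c j) * M * mvar i else 0))"
    by (rule sum.cong) (auto simp: shear_def algebra_simps)
  also have "\<dots> = lin_comb n c + of_int (c j) * M * mvar i"
    using assms by (simp add: sum.distrib lin_comb_def sum.delta)
  finally show ?thesis .
qed

lemma mpoly_subst_shear_bott_alpha:
  assumes "bott_matrix n A" "j < n" "k < n"
  shows "mpoly_subst (shear j i M) (bott_alpha A k) = bott_alpha A k + of_int (A j k) * M * mvar i"
  using assms by (simp add: bott_alpha_eq_lin_comb mpoly_subst_shear_lin_comb)

text \<open>The substitution \<open>x\<^sub>j \<mapsto> x\<^sub>j + m x\<^sub>i\<close> turns \<open>\<alpha>\<^sup>A\<^sub>k\<close> into \<open>\<alpha>\<^sup>B\<^sub>k\<close> for \<open>k \<noteq> j\<close>, and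
  (when \<open>\<alpha>\<^sup>A\<^sub>j = 2m x\<^sub>i - m \<alpha>\<^sup>A\<^sub>i\<close>) the \<open>j\<close>-th relation of \<open>A\<close> into that of \<open>B\<close> modulo the \<open>i\<close>-th.\<close>

definition shear_matrix :: "(nat \<Rightarrow> nat \<Rightarrow> int) \<Rightarrow> nat \<Rightarrow> nat \<Rightarrow> int \<Rightarrow> nat \<Rightarrow> nat \<Rightarrow> int" where
  "shear_matrix A j i m =
     (\<lambda>l k. A l k + (if l = i then m * A j k - (if k = j then 2 * m else 0) else 0))"

lemma bott_matrix_shear_matrix:
  assumes A: "bott_matrix n A" and "i < j" "j < n"
  shows "bott_matrix n (shear_matrix A j i m)"
  unfolding bott_matrix_def
proof (intro allI impI)
  fix l k assume nz: "shear_matrix A j i m l k \<noteq> 0"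
  show "l < k \<and> k < n"
  proof (cases "l = i")
    case True
    with nz have "A i k \<noteq> 0 \<or> A j k \<noteq> 0 \<or> k = j"
      by (auto simp: shear_matrix_def split: if_splits)
    with A True \<open>i < j\<close> \<open>j < n\<close> show ?thesis
      unfolding bott_matrix_def by (metis order.strict_trans)
  qed (use nz A in \<open>simp add: shear_matrix_def bott_matrix_def\<close>)
qed

lemma shear_matrix_column_less:
  assumes "bott_matrix n A" "k < j"
  shows "shear_matrix A j i m l k = A l k"
proof -
  have "A j k = 0"
    using assms unfolding bott_matrix_def by (meson less_asym)
  with assms(2) show ?thesis
    by (simp add: shear_matrix_def)
qed

lemma bott_alpha_shear_matrix:
  assumes A: "bott_matrix n A" and "i < j" "j < n" "k < n"
  shows "bott_alpha (shear_matrix A j i m) k =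
    bott_alpha A k + of_int (m * A j k) * mvar i - (if k = j then of_int (2 * m) * mvar i else 0)"
proof -
  have "bott_alpha (shear_matrix A j i m) k =
      lin_comb n (\<lambda>l. A l k + (if l = i then m * A j k - (if k = j then 2 * m else 0) else 0))"
    using bott_alpha_eq_lin_comb[OF bott_matrix_shear_matrix[OF assms(1-3), of m] assms(4)]
    unfolding shear_matrix_def .
  also have "\<dots> = bott_alpha A k + of_int (m * A j k - (if k = j then 2 * m else 0)) * mvar i"
    using assms by (simp add: lin_comb_add lin_comb_delta bott_alpha_eq_lin_comb)
  finally show ?thesis
    by (cases "k = j") (simp_all add: algebra_simps)
qed

section \<open>Removing an alpha of even exceptional type\<close>

definition bott_equiv :: "nat \<Rightarrow> (nat \<Rightarrow> nat \<Rightarrow> int) \<Rightarrow> (nat \<Rightarrow> nat \<Rightarrow> int) \<Rightarrow> bool" where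
  "bott_equiv n A B \<longleftrightarrow>
     bott_matrix n B \<and> (\<exists>\<psi>. graded_ring_iso n A B \<psi> \<and> \<psi> (pontrjagin n A) = pontrjagin n B)"

lemma bott_equiv_refl: "bott_matrix n A \<Longrightarrow> bott_equiv n A A"
  unfolding bott_equiv_def graded_ring_iso_def
  using ring_iso_set_refl by (intro conjI exI[of _ id]) auto

lemma bott_equiv_trans: "bott_equiv n A B \<Longrightarrow> bott_equiv n B C \<Longrightarrow> bott_equiv n A C"
  unfolding bott_equiv_def graded_ring_iso_def
proof (elim conjE exE, intro conjI exI)
  fix f g
  assume f: "f \<in> ring_iso (cohom n A) (cohom n B)" "\<forall>d. f ` cohom_deg n A d \<subseteq> cohom_deg n B d"
      "f (pontrjagin n A) = pontrjagin n B"
    and g: "g \<in> ring_iso (cohom n B) (cohom n C)" "\<forall>d. g ` cohom_deg n B d \<subseteq> cohom_deg n C d"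
      "g (pontrjagin n B) = pontrjagin n C"
    and "bott_matrix n C"
  show "g \<circ> f \<in> ring_iso (cohom n A) (cohom n C)"
    by (rule ring_iso_set_trans[OF f(1) g(1)])
  show "\<forall>d. (g \<circ> f) ` cohom_deg n A d \<subseteq> cohom_deg n C d"
    using f(2) g(2) by (fastforce simp: image_comp[symmetric])
  show "(g \<circ> f) (pontrjagin n A) = pontrjagin n C"
    using f(3) g(3) by simp
  show "bott_matrix n C" by fact
qed

locale even_exc_shear =
  fixes n :: nat and A :: "nat \<Rightarrow> nat \<Rightarrow> int" and j i :: nat and m :: int
  assumes bott_matrix_A: "bott_matrix n A" and i_less_j: "i < j" and j_less_n: "j < n"
    and column_j: "\<And>l. A l j = (if l = i then 2 * m else 0) - m * A l i"
begin

abbreviation B :: "nat \<Rightarrow> nat \<Rightarrow> int" where "B \<equiv> shear_matrix A j i m"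
abbreviation a :: "nat \<Rightarrow> int mpoly" where "a \<equiv> bott_alpha A"
abbreviation b :: "nat \<Rightarrow> int mpoly" where "b \<equiv> bott_alpha B"
abbreviation M :: "int mpoly" where "M \<equiv> of_int m"
abbreviation \<sigma> :: "nat \<Rightarrow> int mpoly" where "\<sigma> \<equiv> shear j i M"
abbreviation \<tau> :: "nat \<Rightarrow> int mpoly" where "\<tau> \<equiv> shear j i (- M)"

lemma i_less_n: "i < n"
  using i_less_j j_less_n by simp

lemma A_row_j: "A j i = 0" "A j j = 0"
  using bott_matrix_A i_less_j unfolding bott_matrix_def by (meson less_asym less_irrefl)+

lemma B_row_j: "B j k = A j k"
  using i_less_j by (simp add: shear_matrix_def)

lemma bott_matrix_B: "bott_matrix n B"
  by (rule bott_matrix_shear_matrix[OF bott_matrix_A i_less_j j_less_n])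

lemma b_eq: "k < n \<Longrightarrow> b k = a k + of_int (m * A j k) * mvar i - (if k = j then 2 * M * mvar i else 0)"
  using bott_alpha_shear_matrix[OF bott_matrix_A i_less_j j_less_n, of k m, where 'a=int] by simp

lemma scaled_M_power_in_poly_ring: "of_int c * M ^ k \<in> carrier (poly_ring n)"
  using of_int_in_poly_ring[of "c * m ^ k" n, where 'a=int] by simp

lemma b_i: "b i = a i"
  using b_eq[OF i_less_n] A_row_j i_less_j by simp

lemma a_j: "a j = 2 * M * mvar i - M * a i"
proof -
  have "a j = lin_comb n (\<lambda>l. (if l = i then 2 * m else 0) + (- m) * A l i)"
    using bott_alpha_eq_lin_comb[OF bott_matrix_A j_less_n] column_j by simp
  also have "\<dots> = 2 * M * mvar i - M * a i"
    unfolding lin_comb_add lin_comb_delta[OF i_less_n] bott_alpha_eq_lin_comb[OF bott_matrix_A i_less_n]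
    by (simp add: lin_comb_def sum_distrib_left algebra_simps sum_negf)
  finally show ?thesis .
qed

lemma b_j: "b j = - M * a i"
  using b_eq[OF j_less_n] A_row_j a_j by (simp add: algebra_simps)

lemma \<sigma>_a: "k < n \<Longrightarrow> mpoly_subst \<sigma> (a k) = a k + of_int (A j k) * M * mvar i"
  by (rule mpoly_subst_shear_bott_alpha[OF bott_matrix_A j_less_n])

lemma \<sigma>_a_j: "mpoly_subst \<sigma> (a j) = a j"
  using \<sigma>_a[OF j_less_n] A_row_j by simp

lemma \<sigma>_a_other: "k < n \<Longrightarrow> k \<noteq> j \<Longrightarrow> mpoly_subst \<sigma> (a k) = b k"
  using \<sigma>_a[of k] b_eq[of k] by (simp add: algebra_simps)

lemma \<tau>_b: "k < n \<Longrightarrow> mpoly_subst \<tau> (b k) = b k - of_int (A j k) * M * mvar i"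
  using mpoly_subst_shear_bott_alpha[OF bott_matrix_B j_less_n, of k i "- M"]
  by (simp add: B_row_j)

lemma \<tau>_b_j: "mpoly_subst \<tau> (b j) = b j"
  using \<tau>_b[OF j_less_n] A_row_j by simp

lemma \<tau>_b_other: "k < n \<Longrightarrow> k \<noteq> j \<Longrightarrow> mpoly_subst \<tau> (b k) = a k"
  using \<tau>_b[of k] b_eq[of k] by (simp add: algebra_simps)

lemma relation_in_B: "k < n \<Longrightarrow> mvar k ^ 2 - b k * mvar k \<in> (bott_ideal n B :: int mpoly set)"
  by (rule bott_relation_in_bott_ideal)

lemma relation_in_A: "k < n \<Longrightarrow> mvar k ^ 2 - a k * mvar k \<in> (bott_ideal n A :: int mpoly set)"
  by (rule bott_relation_in_bott_ideal)

lemma \<sigma>_relation: "g \<in> bott_relations n A \<Longrightarrow> mpoly_subst \<sigma> g \<in> bott_ideal n B"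
proof -
  assume "g \<in> bott_relations n A"
  then obtain k where k: "k < n" and g: "g = mvar k ^ 2 - a k * mvar k"
    unfolding bott_relations_def by blast
  show ?thesis
  proof (cases "k = j")
    case False
    with k have "mpoly_subst \<sigma> g = mvar k ^ 2 - b k * mvar k"
      by (simp add: g mpoly_subst_diff mpoly_subst_mult mpoly_subst_power \<sigma>_a_other shear_def)
    with relation_in_B[OF k] show ?thesis
      by simp
  next
    case True
    have "mpoly_subst \<sigma> g = (mvar j + M * mvar i) ^ 2 - a j * (mvar j + M * mvar i)"
      by (simp add: g True mpoly_subst_diff mpoly_subst_mult mpoly_subst_power \<sigma>_a_j shear_def)
    also have "\<dots> = (mvar j ^ 2 - b j * mvar j) - M ^ 2 * (mvar i ^ 2 - b i * mvar i)"
      unfolding a_j b_j b_i by (simp add: power2_eq_square algebra_simps)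
    finally show ?thesis
      using poly_ideal_diff[OF ideal_bott_ideal relation_in_B[OF j_less_n]
          poly_ideal_mult[OF ideal_bott_ideal relation_in_B[OF i_less_n]
            scaled_M_power_in_poly_ring[of 1 2]]]
      by simp
  qed
qed

lemma \<tau>_relation: "g \<in> bott_relations n B \<Longrightarrow> mpoly_subst \<tau> g \<in> bott_ideal n A"
proof -
  assume "g \<in> bott_relations n B"
  then obtain k where k: "k < n" and g: "g = mvar k ^ 2 - b k * mvar k"
    unfolding bott_relations_def by blast
  show ?thesis
  proof (cases "k = j")
    case False
    with k have "mpoly_subst \<tau> g = mvar k ^ 2 - a k * mvar k"
      by (simp add: g mpoly_subst_diff mpoly_subst_mult mpoly_subst_power \<tau>_b_other shear_def)
    with relation_in_A[OF k] show ?thesis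
      by simp
  next
    case True
    have "mpoly_subst \<tau> g = (mvar j - M * mvar i) ^ 2 - b j * (mvar j - M * mvar i)"
      by (simp add: g True mpoly_subst_diff mpoly_subst_mult mpoly_subst_power \<tau>_b_j shear_def)
    also have "\<dots> = (mvar j ^ 2 - a j * mvar j) + M ^ 2 * (mvar i ^ 2 - a i * mvar i)"
      unfolding a_j b_j by (simp add: power2_eq_square algebra_simps)
    finally show ?thesis
      using poly_ideal_add[OF ideal_bott_ideal relation_in_A[OF j_less_n]
          poly_ideal_mult[OF ideal_bott_ideal relation_in_A[OF i_less_n]
            scaled_M_power_in_poly_ring[of 1 2]]]
      by simp
  qed
qed

lemma \<sigma>_pontrjagin_factor:
  "k < n \<Longrightarrow> mpoly_subst \<sigma> (1 + a k ^ 2) - (1 + b k ^ 2) \<in> bott_ideal n B"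
proof (cases "k = j")
  case True
  have "mpoly_subst \<sigma> (1 + a k ^ 2) - (1 + b k ^ 2) = (4 * M ^ 2) * (mvar i ^ 2 - b i * mvar i)"
    unfolding True mpoly_subst_add mpoly_subst_power \<sigma>_a_j mpoly_subst_1
    unfolding a_j b_j b_i by (simp add: power2_eq_square algebra_simps)
  then show ?thesis
    using poly_ideal_mult[OF ideal_bott_ideal relation_in_B[OF i_less_n]
        scaled_M_power_in_poly_ring[of 4 2]]
    by simp
qed (simp add: mpoly_subst_add mpoly_subst_power \<sigma>_a_other poly_ideal_zero[OF ideal_bott_ideal])

lemma B_column_j: "B l j = - m * A l i"
  using column_j[of l] A_row_j by (simp add: shear_matrix_def)

lemma B_column_j_vanishes: "i \<le> l \<Longrightarrow> B l j = 0"
  using bott_matrix_A B_column_j unfolding bott_matrix_def by (metis leD mult_zero_right)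

lemma even_exc_free_B:
  assumes "even_exc_free A j"
  shows "even_exc_free B j"
  unfolding even_exc_free_def
proof (intro allI impI)
  fix k i' m' assume "k < j"
  then have "even_exc_pattern B k i' m' \<longleftrightarrow> even_exc_pattern A k i' m'"
    by (intro even_exc_pattern_cong shear_matrix_column_less[OF bott_matrix_A]) simp
  with assms \<open>k < j\<close> show "\<not> even_exc_pattern B k i' m'"
    unfolding even_exc_free_def by blast
qed

lemma \<sigma>_pontrjagin:
  "mpoly_subst \<sigma> (\<Prod>k<n. 1 + a k ^ 2) - (\<Prod>k<n. 1 + b k ^ 2) \<in> bott_ideal n B"
  unfolding mpoly_subst_prod
proof (rule prod_diff_in_poly_ideal[OF ideal_bott_ideal])
  fix k assume "k \<in> {..<n}"
  then have k: "k \<le> n" "k < n"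
    by simp_all
  have "mpoly_subst \<sigma> (1 + a k ^ 2) \<in> carrier (poly_ring n)"
    by (intro mpoly_subst_in_poly_ring poly_ring_closed shear_in_poly_ring i_less_n j_less_n
        bott_alpha_in_poly_ring k(1))
  moreover have "1 + b k ^ 2 \<in> carrier (poly_ring n)"
    by (intro poly_ring_closed bott_alpha_in_poly_ring k(1))
  ultimately show "mpoly_subst \<sigma> (1 + a k ^ 2) \<in> carrier (poly_ring n) \<and> 1 + b k ^ 2 \<in> carrier (poly_ring n)
      \<and> mpoly_subst \<sigma> (1 + a k ^ 2) - (1 + b k ^ 2) \<in> bott_ideal n B"
    using \<sigma>_pontrjagin_factor[OF k(2)] by blast
qed

lemma bott_equiv_shear_matrix: "bott_equiv n A B"
proof -
  have M_in: "M \<in> carrier (poly_ring n)" "- M \<in> carrier (poly_ring n)"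
    using scaled_M_power_in_poly_ring[of 1 1] scaled_M_power_in_poly_ring[of "- 1" 1] by simp_all
  have \<sigma>_in: "\<sigma> k \<in> carrier (poly_ring n)" and \<tau>_in: "\<tau> k \<in> carrier (poly_ring n)" if "k < n" for k
    using shear_in_poly_ring[OF i_less_n j_less_n that M_in(1)]
      shear_in_poly_ring[OF i_less_n j_less_n that M_in(2)] by simp_all
  have "i \<noteq> j"
    using i_less_j by simp
  note inverse = mpoly_subst_shear_shear[OF this, of m]
  obtain \<psi> where \<psi>: "\<psi> \<in> ring_iso (cohom n A) (cohom n B)"
    and \<psi>_class: "\<And>p. p \<in> carrier (poly_ring n) \<Longrightarrow>
      \<psi> (cohom_class n A p) = cohom_class n B (mpoly_subst \<sigma> p)"
    using cohom_iso_of_mpoly_subst[OF \<sigma>_in \<tau>_in inverse \<sigma>_relation \<tau>_relation] by blast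
  have "\<psi> ` cohom_deg n A d \<subseteq> cohom_deg n B d" for d
    by (rule image_cohom_deg_mpoly_subst[OF \<psi>_class \<sigma>_in homogeneous_shear[OF homogeneous_of_int]])
  moreover have "\<psi> (pontrjagin n A) = pontrjagin n B"
  proof -
    have PA: "(\<Prod>k<n. 1 + a k ^ 2) \<in> carrier (poly_ring n)"
      by (intro poly_ring_closed bott_alpha_in_poly_ring) auto
    have "(\<Prod>k<n. 1 + b k ^ 2) \<in> carrier (poly_ring n)"
      by (intro poly_ring_closed bott_alpha_in_poly_ring) auto
    with mpoly_subst_in_poly_ring[OF PA \<sigma>_in] \<sigma>_pontrjagin
    have "cohom_class n B (mpoly_subst \<sigma> (\<Prod>k<n. 1 + a k ^ 2)) = cohom_class n B (\<Prod>k<n. 1 + b k ^ 2)"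
      by (simp add: cohom_class_eq_iff del: poly_ring_simps(1))
    then show ?thesis
      unfolding pontrjagin_def \<psi>_class[OF PA] .
  qed
  ultimately show ?thesis
    unfolding bott_equiv_def graded_ring_iso_def using bott_matrix_B \<psi> by blast
qed

end

section \<open>Clearing the columns one by one\<close>

lemma bott_equiv_fix_column:
  assumes "p < n"
  shows "bott_equiv n A C \<Longrightarrow> even_exc_free C p \<Longrightarrow> \<forall>l\<ge>t. C l p = 0 \<Longrightarrow>
    \<exists>D. bott_equiv n A D \<and> even_exc_free D (Suc p)"
proof (induction t arbitrary: C rule: less_induct)
  case (less t C)
  have C: "bott_matrix n C"
    using less.prems(1) unfolding bott_equiv_def by blast
  show ?case
  proof (cases "\<exists>i m. even_exc_pattern C p i m")
    case False
    with less.prems(2) have "even_exc_free C (Suc p)"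
      unfolding even_exc_free_def by (auto simp: less_Suc_eq)
    with less.prems(1) show ?thesis
      by blast
  next
    case True
    then obtain i m where i: "i < p" and "m \<noteq> 0"
      and column: "\<And>l. C l p = (if l = i then 2 * m else 0) - m * C l i"
      unfolding even_exc_pattern_def by blast
    interpret even_exc_shear n C p i m
      using C i assms column by unfold_locales
    have "C i i = 0"
      using C unfolding bott_matrix_def by blast
    then have "C i p \<noteq> 0"
      using column[of i] \<open>m \<noteq> 0\<close> by simp
    with less.prems(3) have "i < t"
      using not_le by blast
    moreover have "bott_equiv n A B"
      using less.prems(1) bott_equiv_shear_matrix by (rule bott_equiv_trans)
    text \<open>The shear replaces column \<open>p\<close> by \<open>-m\<close> times column \<open>i\<close>, which vanishes from row
      \<open>i\<close> on.\<close>
    ultimately show ?thesis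
      using less.IH even_exc_free_B[OF less.prems(2)] B_column_j_vanishes by blast
  qed
qed

lemma bott_equiv_fix_columns:
  "bott_matrix n A \<Longrightarrow> p \<le> n \<Longrightarrow> \<exists>B. bott_equiv n A B \<and> even_exc_free B p"
proof (induction p)
  case 0
  then show ?case
    using bott_equiv_refl by (auto simp: even_exc_free_def)
next
  case (Suc p)
  then obtain B where B: "bott_equiv n A B" "even_exc_free B p"
    by auto
  have "B l p = 0" if "n \<le> l" for l
  proof (rule ccontr)
    assume "B l p \<noteq> 0"
    with B(1) have "l < p" "p < n"
      unfolding bott_equiv_def bott_matrix_def by blast+
    with that show False
      by simp
  qed
  with B Suc.prems(2) show ?case
    using bott_equiv_fix_column[of p n A B n] by auto
qed

theorem lemma4p5:
  fixes n :: nat and A :: "nat \<Rightarrow> nat \<Rightarrow> int"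
  assumes "bott_matrix n A"
  shows "\<exists>B \<psi>. bott_matrix n B \<and> (\<forall>j<n. \<not> even_exceptional n B j) \<and>
           graded_ring_iso n A B \<psi> \<and> \<psi> (pontrjagin n A) = pontrjagin n B"
proof -
  obtain B where "bott_equiv n A B" and free: "even_exc_free B n"
    using bott_equiv_fix_columns[OF assms order_refl] by blast
  then obtain \<psi> where B: "bott_matrix n B"
    and "graded_ring_iso n A B \<psi>" "\<psi> (pontrjagin n A) = pontrjagin n B"
    unfolding bott_equiv_def by blast
  moreover have "\<forall>j<n. \<not> even_exceptional n B j"
    using free even_exceptional_imp_pattern[OF B] unfolding even_exc_free_def by blast
  ultimately show ?thesis
    by blast
qed

end
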